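(* Let $\epsilon\in(0,1)$, $u_0\in\mathbb{R}\setminus\{0,1,-1\}$, and let $h^*=\frac{8\epsilon^2}{u_0^2+4|u_0|+3}$ if $|u_0|>1$ and $h^*=\epsilon^2$ if $0<|u_0|<1$. For every $h\in(0,h^*]$, any real sequence $(u_n)_{n\ge0}$ starting at $u_0$ and satisfying the implicit midpoint scheme $$\frac{u_n-u_{n-1}}{h}+\frac{1}{\epsilon^2}f\!\left(\frac{u_n+u_{n-1}}{2}\right)=0,\qquad n\ge1,\quad f(u)=u^3-u,$$ satisfies $E(u_n)\le E(u_{n-1})$ for all $n\ge1$, where $E(v)=\frac{1}{4\epsilon^2}(v^2-1)^2$.
   Context: The scheme discretizes the ODE $u'(t)+\frac{1}{\epsilon^2}(u^3-u)=0$, $u(0)=u_0$. For $h\le2\epsilon^2$ each step equation has a unique real solution. *)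

theory Defs
  imports Complex_Main
begin

definition f_ac :: "real \<Rightarrow> real" where
  "f_ac u = u ^ 3 - u"

definition energy :: "real \<Rightarrow> real \<Rightarrow> real" where
  "energy \<epsilon> v = 1 / (4 * \<epsilon>^2) * (v^2 - 1)^2"

definition hstar :: "real \<Rightarrow> real \<Rightarrow> real" where
  "hstar \<epsilon> u0 = (if \<bar>u0\<bar> > 1 then 8 * \<epsilon>^2 / (u0^2 + 4 * \<bar>u0\<bar> + 3) else \<epsilon>^2)"

end

theory Submission
  imports Defs
begin

text \<open>Write \<open>m\<close> for the midpoint of two consecutive iterates and \<open>c = h / \<epsilon>\<^sup>2\<close>. The scheme says
  that the increment is \<open>c t\<close> with \<open>t = m (1 - m\<^sup>2)\<close>, and then the quartic \<open>(v\<^sup>2 - 1)\<^sup>2\<close> changes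
  by exactly \<open>c t\<^sup>2 (c\<^sup>2 t m - 4)\<close>. Since \<open>t m = m\<^sup>2 (1 - m\<^sup>2) \<le> 1/4\<close>, this is nonpositive whenever
  \<open>c \<le> 4\<close>, i.e. \<open>h \<le> 4 \<epsilon>\<^sup>2\<close>. The threshold \<open>h\<^sup>*\<close> never exceeds \<open>\<epsilon>\<^sup>2\<close>.\<close>

lemma hstar_le_square: "hstar \<epsilon> u0 \<le> \<epsilon>\<^sup>2"
proof (cases "\<bar>u0\<bar> > 1")
  case True
  then have "1 \<le> u0\<^sup>2"
    by (metis less_imp_le one_le_power power2_abs)
  with True have "8 \<le> u0\<^sup>2 + 4 * \<bar>u0\<bar> + 3"
    by simp
  then have "8 * \<epsilon>\<^sup>2 / (u0\<^sup>2 + 4 * \<bar>u0\<bar> + 3) \<le> 8 * \<epsilon>\<^sup>2 / 8"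
    by (intro divide_left_mono) auto
  with True show ?thesis
    by (simp add: hstar_def)
qed (simp add: hstar_def)

lemma quartic_increment_midpoint:
  fixes a b c m t :: real
  assumes m: "m = (a + b) / 2" and t: "t = m * (1 - m\<^sup>2)" and increment: "b - a = c * t"
  shows "(b\<^sup>2 - 1)\<^sup>2 - (a\<^sup>2 - 1)\<^sup>2 = c * t\<^sup>2 * (c\<^sup>2 * (t * m) - 4)"
proof -
  have a: "a = m - c * t / 2" and b: "b = m + c * t / 2"
    using increment unfolding m by (simp_all add: field_simps)
  show ?thesis
    unfolding a b t by (simp add: field_simps power2_eq_square)
qed

lemma square_mult_one_minus_square_le: "m * (1 - m\<^sup>2) * m \<le> (1 / 4 :: real)"
proof -
  have "0 \<le> (2 * m\<^sup>2 - 1)\<^sup>2"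
    by simp
  then show ?thesis
    by (simp add: algebra_simps power2_eq_square)
qed

lemma implicit_midpoint_energy_decay:
  fixes \<epsilon> h a b :: real
  assumes "0 < \<epsilon>" and "0 < h" and "h \<le> 4 * \<epsilon>\<^sup>2"
    and step: "(b - a) / h + 1 / \<epsilon>\<^sup>2 * f_ac ((a + b) / 2) = 0"
  shows "energy \<epsilon> b \<le> energy \<epsilon> a"
proof -
  define c where "c = h / \<epsilon>\<^sup>2"
  define m where "m = (a + b) / 2"
  define t where "t = m * (1 - m\<^sup>2)"
  have c_pos: "0 < c" and c_le: "c \<le> 4"
    using assms(1-3) by (simp_all add: c_def field_simps)
  have "b - a = c * t"
    using step assms(1,2) unfolding c_def t_def m_def f_ac_def
    by (simp add: field_simps power2_eq_square power3_eq_cube)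
  then have quartic: "(b\<^sup>2 - 1)\<^sup>2 - (a\<^sup>2 - 1)\<^sup>2 = c * t\<^sup>2 * (c\<^sup>2 * (t * m) - 4)"
    by (rule quartic_increment_midpoint[OF m_def t_def])
  have "c\<^sup>2 * (t * m) \<le> 4"
  proof (cases "0 \<le> t * m")
    case True
    have "c\<^sup>2 \<le> 4\<^sup>2"
      using c_pos c_le by (intro power_mono) auto
    moreover have "t * m \<le> 1 / 4"
      unfolding t_def by (rule square_mult_one_minus_square_le)
    ultimately have "c\<^sup>2 * (t * m) \<le> 4\<^sup>2 * (1 / 4)"
      using True by (intro mult_mono) auto
    then show ?thesis
      by simp
  next
    case False
    then have "c\<^sup>2 * (t * m) \<le> 0"
      by (simp add: mult_nonneg_nonpos)
    then show ?thesis
      by simp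
  qed
  with c_pos have "(b\<^sup>2 - 1)\<^sup>2 - (a\<^sup>2 - 1)\<^sup>2 \<le> 0"
    unfolding quartic by (simp add: mult_nonneg_nonpos)
  with assms(1) show ?thesis
    by (simp add: energy_def divide_right_mono)
qed

theorem theorem3p8:
  fixes \<epsilon> h :: real and u :: "nat \<Rightarrow> real"
  assumes "0 < \<epsilon>" and "\<epsilon> < 1"
    and "u 0 \<noteq> 0" and "u 0 \<noteq> 1" and "u 0 \<noteq> -1"
    and "0 < h" and "h \<le> hstar \<epsilon> (u 0)"
    and "\<And>n. n \<ge> 1 \<Longrightarrow>
           (u n - u (n - 1)) / h + 1 / \<epsilon>^2 * f_ac ((u n + u (n - 1)) / 2) = 0"
  shows "\<forall>n\<ge>1. energy \<epsilon> (u n) \<le> energy \<epsilon> (u (n - 1))"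
proof (intro allI impI)
  fix n :: nat
  assume "n \<ge> 1"
  have "h \<le> 4 * \<epsilon>\<^sup>2"
    using assms(7) hstar_le_square[of \<epsilon> "u 0"] zero_le_power2[of \<epsilon>] by linarith
  moreover have "(u n - u (n - 1)) / h + 1 / \<epsilon>\<^sup>2 * f_ac ((u (n - 1) + u n) / 2) = 0"
    using assms(8)[OF \<open>n \<ge> 1\<close>] by (simp add: add.commute)
  ultimately show "energy \<epsilon> (u n) \<le> energy \<epsilon> (u (n - 1))"
    by (rule implicit_midpoint_energy_decay[OF assms(1,6)])
qed

end
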